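(* Let $\mathcal F\subseteq\mathcal G$ be two prime lattice filters of an MV-algebra $\mathcal L$. Then $$\mathcal F\sqsubseteq\!\!\to\mathcal G=J_u(\mathcal F,\mathcal K(\mathcal G))\sqsubseteq\!\!\to J_d(\mathcal G,\mathcal K(\mathcal F)).$$
   Context: $\mathcal L=(L,\oplus,\lnot,0)$ is an MV-algebra. We write $1=\lnot 0$, $x\otimes y=\lnot(\lnot x\oplus\lnot y)$, and $x\to y=\lnot x\oplus y$, and use the usual lattice order. A lattice filter is a nonempty upward-closed subset closed under $\wedge$. It is prime if it is proper and $a\vee b\in\mathcal F$ implies $a\in\mathcal F$ or $b\in\mathcal F$. For an upward-closed $\mathcal F$ and $a\in L$, let $\mathcal F_a=\{z: z\to a\notin\mathcal F\}$, $\mathcal F^+=\mathcal F_0$, and $\mathcal K(\mathcal F)=\{z : \forall a\notin\mathcal F,\ z\to a\notin\mathcal F\}$ (the kernel; it is an implication filter). An implication filter is a set $P\ni 1$ closed under modus ponens ($x, x\to y\in P\Rightarrow y\in P$). $\eta_P\colon\mathcal L\to\mathcal L/P$ is the canonical epimorphism onto the quotient by the congruence $x\sim_P y\iff x\to y,\ y\to x\in P$, and $X/P=\eta_P[X]$. We set $J_u(\mathcal F,P)=\eta_P^{-1}[\mathcal F/P]$ and $J_d(\mathcal F,P)=\big(J_u(\mathcal F^+,P)\big)^+$. For $\mathcal F\subseteq\mathcal G$ we put $\mathcal F\sqsubseteq\!\!\to\mathcal G=\bigcap_{a\in L\setminus\mathcal G}\mathcal F_a$, and in general $\mathcal F\sqsubseteq\!\!\to\mathcal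 G:=(\mathcal F\cap\mathcal G)\sqsubseteq\!\!\to\mathcal G$. *)

theory Defs
  imports Main
begin

definition mv_algebra :: "('a \<Rightarrow> 'a \<Rightarrow> 'a) \<Rightarrow> ('a \<Rightarrow> 'a) \<Rightarrow> 'a \<Rightarrow> bool" where
  "mv_algebra opl ng z \<longleftrightarrow>
     (\<forall>x y w. opl x (opl y w) = opl (opl x y) w) \<and>
     (\<forall>x y. opl x y = opl y x) \<and>
     (\<forall>x. opl x z = x) \<and>
     (\<forall>x. ng (ng x) = x) \<and>
     (\<forall>x. opl x (ng z) = ng z) \<and>
     (\<forall>x y. opl (ng (opl (ng x) y)) y = opl (ng (opl (ng y) x)) x)"

definition mv_one :: "('a \<Rightarrow> 'a \<Rightarrow> 'a) \<Rightarrow> ('a \<Rightarrow> 'a) \<Rightarrow> 'a \<Rightarrow> 'a" where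
  "mv_one opl ng z = ng z"

definition mv_imp :: "('a \<Rightarrow> 'a \<Rightarrow> 'a) \<Rightarrow> ('a \<Rightarrow> 'a) \<Rightarrow> 'a \<Rightarrow> 'a \<Rightarrow> 'a" where
  "mv_imp opl ng x y = opl (ng x) y"

definition mv_le :: "('a \<Rightarrow> 'a \<Rightarrow> 'a) \<Rightarrow> ('a \<Rightarrow> 'a) \<Rightarrow> 'a \<Rightarrow> 'a \<Rightarrow> 'a \<Rightarrow> bool" where
  "mv_le opl ng z x y \<longleftrightarrow> mv_imp opl ng x y = mv_one opl ng z"

definition mv_sup :: "('a \<Rightarrow> 'a \<Rightarrow> 'a) \<Rightarrow> ('a \<Rightarrow> 'a) \<Rightarrow> 'a \<Rightarrow> 'a \<Rightarrow> 'a" where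
  "mv_sup opl ng x y = opl (ng (opl (ng x) y)) y"

definition mv_inf :: "('a \<Rightarrow> 'a \<Rightarrow> 'a) \<Rightarrow> ('a \<Rightarrow> 'a) \<Rightarrow> 'a \<Rightarrow> 'a \<Rightarrow> 'a" where
  "mv_inf opl ng x y = ng (mv_sup opl ng (ng x) (ng y))"

definition up_closed :: "('a \<Rightarrow> 'a \<Rightarrow> 'a) \<Rightarrow> ('a \<Rightarrow> 'a) \<Rightarrow> 'a \<Rightarrow> 'a set \<Rightarrow> bool" where
  "up_closed opl ng z F \<longleftrightarrow> (\<forall>x y. x \<in> F \<and> mv_le opl ng z x y \<longrightarrow> y \<in> F)"

definition lattice_filter :: "('a \<Rightarrow> 'a \<Rightarrow> 'a) \<Rightarrow> ('a \<Rightarrow> 'a) \<Rightarrow> 'a \<Rightarrow> 'a set \<Rightarrow> bool" where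
  "lattice_filter opl ng z F \<longleftrightarrow> F \<noteq> {} \<and> up_closed opl ng z F \<and>
     (\<forall>x y. x \<in> F \<and> y \<in> F \<longrightarrow> mv_inf opl ng x y \<in> F)"

definition prime_filter :: "('a \<Rightarrow> 'a \<Rightarrow> 'a) \<Rightarrow> ('a \<Rightarrow> 'a) \<Rightarrow> 'a \<Rightarrow> 'a set \<Rightarrow> bool" where
  "prime_filter opl ng z F \<longleftrightarrow> lattice_filter opl ng z F \<and> F \<noteq> UNIV \<and>
     (\<forall>a b. mv_sup opl ng a b \<in> F \<longrightarrow> a \<in> F \<or> b \<in> F)"

definition Fsub :: "('a \<Rightarrow> 'a \<Rightarrow> 'a) \<Rightarrow> ('a \<Rightarrow> 'a) \<Rightarrow> 'a set \<Rightarrow> 'a \<Rightarrow> 'a set" where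
  "Fsub opl ng F a = {w. mv_imp opl ng w a \<notin> F}"

definition Fplus :: "('a \<Rightarrow> 'a \<Rightarrow> 'a) \<Rightarrow> ('a \<Rightarrow> 'a) \<Rightarrow> 'a \<Rightarrow> 'a set \<Rightarrow> 'a set" where
  "Fplus opl ng z F = Fsub opl ng F z"

definition kernel :: "('a \<Rightarrow> 'a \<Rightarrow> 'a) \<Rightarrow> ('a \<Rightarrow> 'a) \<Rightarrow> 'a set \<Rightarrow> 'a set" where
  "kernel opl ng F = {w. \<forall>a. a \<notin> F \<longrightarrow> mv_imp opl ng w a \<notin> F}"

definition imp_equiv :: "('a \<Rightarrow> 'a \<Rightarrow> 'a) \<Rightarrow> ('a \<Rightarrow> 'a) \<Rightarrow> 'a set \<Rightarrow> 'a \<Rightarrow> 'a \<Rightarrow> bool" where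
  "imp_equiv opl ng P x y \<longleftrightarrow> mv_imp opl ng x y \<in> P \<and> mv_imp opl ng y x \<in> P"

definition eta :: "('a \<Rightarrow> 'a \<Rightarrow> 'a) \<Rightarrow> ('a \<Rightarrow> 'a) \<Rightarrow> 'a set \<Rightarrow> 'a \<Rightarrow> 'a set" where
  "eta opl ng P x = {y. imp_equiv opl ng P x y}"

definition J_u :: "('a \<Rightarrow> 'a \<Rightarrow> 'a) \<Rightarrow> ('a \<Rightarrow> 'a) \<Rightarrow> 'a set \<Rightarrow> 'a set \<Rightarrow> 'a set" where
  "J_u opl ng F P = eta opl ng P -` (eta opl ng P ` F)"

definition J_d :: "('a \<Rightarrow> 'a \<Rightarrow> 'a) \<Rightarrow> ('a \<Rightarrow> 'a) \<Rightarrow> 'a \<Rightarrow> 'a set \<Rightarrow> 'a set \<Rightarrow> 'a set" where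
  "J_d opl ng z F P = Fplus opl ng z (J_u opl ng (Fplus opl ng z F) P)"

definition sqimp :: "('a \<Rightarrow> 'a \<Rightarrow> 'a) \<Rightarrow> ('a \<Rightarrow> 'a) \<Rightarrow> 'a set \<Rightarrow> 'a set \<Rightarrow> 'a set" where
  "sqimp opl ng F G = (\<Inter>a\<in>- G. Fsub opl ng (F \<inter> G) a)"

end

theory Submission
  imports Defs
begin

text \<open>
  Proof idea.  Write A = J_u(F, K(G)) and B = J_d(G, K(F)).  Only two things about
  F and G are used: F is upward closed and F \<subseteq> G.

  (1) F \<subseteq> A trivially, and F \<subseteq> B \<subseteq> G; hence F \<inter> G \<subseteq> A \<inter> B and every a \<notin> G
      also lies outside B, so the intersection defining the right-hand side
      A \<sqsubseteq>\<rightarrow> B is contained in the one defining F \<sqsubseteq>\<rightarrow> G.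
  (2) Conversely, let w \<in> F \<sqsubseteq>\<rightarrow> G, a \<notin> B and suppose w \<rightarrow> a \<in> A.  Unfolding A and B
      yields f \<in> F with p = f \<rightarrow> (w \<rightarrow> a) \<in> K(G), and g with \<not>g \<notin> G and
      q = g \<rightarrow> \<not>a \<in> K(F).  Pushing \<not>g out of G and then out of F through the
      kernels gives f \<rightarrow> (q \<rightarrow> (w \<rightarrow> (p \<rightarrow> \<not>g))) \<notin> F, whereas the Lukasiewicz
      resolution law (u \<oplus> a) \<rightarrow> ((v \<oplus> \<not>a) \<rightarrow> (u \<oplus> v)) = 1 says this element is 1.
\<close>

locale mv =
  fixes opl :: "'a \<Rightarrow> 'a \<Rightarrow> 'a" (infixl "\<oplus>" 65) and ng :: "'a \<Rightarrow> 'a" and z :: 'a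
  assumes mv: "mv_algebra opl ng z"
begin

abbreviation imp :: "'a \<Rightarrow> 'a \<Rightarrow> 'a" (infixr "\<rightarrow>" 25) where
  "x \<rightarrow> y \<equiv> mv_imp opl ng x y"

lemma assoc: "x \<oplus> (y \<oplus> w) = x \<oplus> y \<oplus> w"
  using mv unfolding mv_algebra_def by blast

lemma comm: "x \<oplus> y = y \<oplus> x"
  using mv unfolding mv_algebra_def by blast

lemma lcomm: "x \<oplus> (y \<oplus> w) = y \<oplus> (x \<oplus> w)"
  by (simp only: assoc comm[of x y])

lemmas AC = assoc[symmetric] comm lcomm

lemma zero_right [simp]: "x \<oplus> z = x"
  using mv unfolding mv_algebra_def by blast

lemma zero_left [simp]: "z \<oplus> x = x"
  using zero_right comm by metis

lemma neg_neg [simp]: "ng (ng x) = x"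
  using mv unfolding mv_algebra_def by blast

lemma one_right [simp]: "x \<oplus> ng z = ng z"
  using mv unfolding mv_algebra_def by blast

lemma one_left [simp]: "ng z \<oplus> x = ng z"
  using one_right comm by metis

lemma mv_axiom: "ng (ng x \<oplus> y) \<oplus> y = ng (ng y \<oplus> x) \<oplus> x"
  using mv unfolding mv_algebra_def by blast

lemma one_imp [simp]: "(ng z \<rightarrow> x) = x"
  by (simp add: mv_imp_def)

lemma neg_oplus_self: "ng x \<oplus> x = ng z"
  using mv_axiom[of x "ng z"] by simp

lemma oplus_neg_self: "x \<oplus> ng x = ng z"
  using neg_oplus_self[of x] comm by simp

text \<open>Cut: if c \<le> M and \<not>c \<le> N then M \<oplus> N = 1.  Uses that c \<le> M means M = c \<oplus> k.\<close>
lemma cut: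
  assumes "ng c \<oplus> M = ng z" and "c \<oplus> N = ng z"
  shows "M \<oplus> N = ng z"
proof -
  have "M = c \<oplus> ng (ng M \<oplus> c)"
    using mv_axiom[of c M] assms(1) comm[of "ng (ng M \<oplus> c)" c] by simp
  then have "M \<oplus> N = ng (ng M \<oplus> c) \<oplus> (c \<oplus> N)"
    by (simp add: AC)
  then show ?thesis
    using assms(2) by simp
qed

lemma resolution: "(u \<oplus> a \<rightarrow> (v \<oplus> ng a \<rightarrow> u \<oplus> v)) = ng z"
proof -
  have "ng (ng a) \<oplus> (ng (u \<oplus> a) \<oplus> u) = ng z"
    using neg_oplus_self[of "u \<oplus> a"] by (simp add: AC)
  moreover have "ng a \<oplus> (ng (v \<oplus> ng a) \<oplus> v) = ng z"
    using neg_oplus_self[of "v \<oplus> ng a"] by (simp add: AC)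
  ultimately have "ng (u \<oplus> a) \<oplus> u \<oplus> (ng (v \<oplus> ng a) \<oplus> v) = ng z"
    by (rule cut)
  then show ?thesis
    by (simp add: mv_imp_def AC)
qed

end

lemma sqimp_iff:
  "w \<in> sqimp opl ng F G \<longleftrightarrow> (\<forall>a. a \<notin> G \<longrightarrow> mv_imp opl ng w a \<notin> F \<inter> G)"
  unfolding sqimp_def Fsub_def by auto

lemma sqimp_antimono:
  assumes "F \<inter> G \<subseteq> A \<inter> B" and "B \<subseteq> G"
  shows "sqimp opl ng A B \<subseteq> sqimp opl ng F G"
  using assms unfolding subset_iff sqimp_iff by blast

lemma up_closedD:
  assumes "up_closed opl ng z F" and "x \<in> F" and "mv_imp opl ng x y = ng z"
  shows "y \<in> F"
  using assms unfolding up_closed_def mv_le_def mv_one_def by blast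

lemma kernelD:
  assumes "k \<in> kernel opl ng F" and "a \<notin> F"
  shows "mv_imp opl ng k a \<notin> F"
  using assms unfolding kernel_def by blast

lemma H_subset_J_u: "H \<subseteq> J_u opl ng H P"
  unfolding J_u_def by blast

lemma (in mv) J_uE:
  assumes "x \<in> J_u opl ng H P" and "ng z \<in> P"
  obtains h where "h \<in> H" and "(h \<rightarrow> x) \<in> P"
proof -
  obtain h where h: "h \<in> H" "eta opl ng P x = eta opl ng P h"
    using assms(1) unfolding J_u_def by auto
  have "x \<in> eta opl ng P x"
    using assms(2) neg_oplus_self[of x] unfolding eta_def imp_equiv_def mv_imp_def by simp
  then have "(h \<rightarrow> x) \<in> P"
    using h(2) unfolding eta_def imp_equiv_def by auto
  with h(1) show thesis ..
qed

text \<open>1 \<rightarrow> a = a, so 1 lies in every kernel; this makes J_uE applicable to P = K(H).\<close>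
lemma (in mv) one_in_kernel: "ng z \<in> kernel opl ng H"
  unfolding kernel_def by simp

lemma (in mv) J_d_iff:
  "x \<in> J_d opl ng z G P \<longleftrightarrow> ng x \<notin> J_u opl ng {w. ng w \<notin> G} P"
  unfolding J_d_def Fplus_def Fsub_def mv_imp_def by simp

text \<open>Since {w. \<not>w \<notin> G} \<subseteq> J_u({w. \<not>w \<notin> G}, P), every element of J_d(G, P) is in G.\<close>
lemma (in mv) J_d_subset: "J_d opl ng z G P \<subseteq> G"
  using H_subset_J_u[of "{w. ng w \<notin> G}" "(\<oplus>)" ng P] unfolding subset_iff J_d_iff by force

lemma (in mv) not_in_J_dE:
  assumes "a \<notin> J_d opl ng z G (kernel opl ng F)"
  obtains g where "ng g \<notin> G" and "(g \<rightarrow> ng a) \<in> kernel opl ng F"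
  using assms one_in_kernel unfolding J_d_iff by (auto elim: J_uE)

text \<open>An upward closed F inside G lies in J_d(G, K(F)): a witness g for w \<notin> J_d would
  give w \<rightarrow> ((g \<rightarrow> \<not>w) \<rightarrow> \<not>g) \<notin> F, but this element is 1.\<close>
lemma (in mv) subset_J_d:
  assumes up: "up_closed opl ng z F" and "F \<subseteq> G"
  shows "F \<subseteq> J_d opl ng z G (kernel opl ng F)"
proof
  fix w assume w: "w \<in> F"
  show "w \<in> J_d opl ng z G (kernel opl ng F)"
  proof (rule ccontr)
    assume "w \<notin> J_d opl ng z G (kernel opl ng F)"
    then obtain g where g: "ng g \<notin> G" "(g \<rightarrow> ng w) \<in> kernel opl ng F"
      by (rule not_in_J_dE)
    have "ng g \<notin> F"
      using g(1) \<open>F \<subseteq> G\<close> by blast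
    then have out: "((g \<rightarrow> ng w) \<rightarrow> ng g) \<notin> F"
      using g(2) by (rule kernelD[rotated])
    have "(w \<rightarrow> ((g \<rightarrow> ng w) \<rightarrow> ng g)) = ng z"
      using oplus_neg_self[of "ng g \<oplus> ng w"] by (simp add: mv_imp_def AC)
    then show False
      using up_closedD[OF up w] out by blast
  qed
qed

lemma (in mv) sqimp_subset_sqimp_J:
  assumes up: "up_closed opl ng z F" and "F \<subseteq> G"
  shows "sqimp opl ng F G \<subseteq>
         sqimp opl ng (J_u opl ng F (kernel opl ng G)) (J_d opl ng z G (kernel opl ng F))"
proof
  fix w assume w: "w \<in> sqimp opl ng F G"
  have w_out: "(w \<rightarrow> b) \<notin> F" if "b \<notin> G" for b
    using w that \<open>F \<subseteq> G\<close> unfolding sqimp_iff by blast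
  show "w \<in> sqimp opl ng (J_u opl ng F (kernel opl ng G)) (J_d opl ng z G (kernel opl ng F))"
    unfolding sqimp_iff
  proof (intro allI impI notI)
    fix a assume a: "a \<notin> J_d opl ng z G (kernel opl ng F)"
      and "(w \<rightarrow> a) \<in> J_u opl ng F (kernel opl ng G) \<inter> J_d opl ng z G (kernel opl ng F)"
    then have "(w \<rightarrow> a) \<in> J_u opl ng F (kernel opl ng G)" by blast
    then obtain f where f: "f \<in> F" and p: "(f \<rightarrow> w \<rightarrow> a) \<in> kernel opl ng G"
      using one_in_kernel by (auto elim: J_uE)
    obtain g where g: "ng g \<notin> G" and q: "(g \<rightarrow> ng a) \<in> kernel opl ng F"
      using a by (rule not_in_J_dE)
    have "((f \<rightarrow> w \<rightarrow> a) \<rightarrow> ng g) \<notin> G"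
      using kernelD[OF p g] .
    then have "(w \<rightarrow> (f \<rightarrow> w \<rightarrow> a) \<rightarrow> ng g) \<notin> F"
      by (rule w_out)
    then have out: "((g \<rightarrow> ng a) \<rightarrow> w \<rightarrow> (f \<rightarrow> w \<rightarrow> a) \<rightarrow> ng g) \<notin> F"
      by (rule kernelD[OF q])
    have "(f \<rightarrow> (g \<rightarrow> ng a) \<rightarrow> w \<rightarrow> (f \<rightarrow> w \<rightarrow> a) \<rightarrow> ng g) = ng z"
      using resolution[of "ng f \<oplus> ng w" a "ng g"] unfolding mv_imp_def by (simp only: AC)
    then have "((g \<rightarrow> ng a) \<rightarrow> w \<rightarrow> (f \<rightarrow> w \<rightarrow> a) \<rightarrow> ng g) \<in> F"
      by (rule up_closedD[OF up f])
    with out show False ..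
  qed
qed

theorem mainTheorem9:
  fixes opl :: "'a \<Rightarrow> 'a \<Rightarrow> 'a" and ng :: "'a \<Rightarrow> 'a" and z :: 'a
    and F G :: "'a set"
  assumes "mv_algebra opl ng z"
    and "prime_filter opl ng z F" and "prime_filter opl ng z G"
    and "F \<subseteq> G"
  shows "sqimp opl ng F G =
         sqimp opl ng (J_u opl ng F (kernel opl ng G)) (J_d opl ng z G (kernel opl ng F))"
proof -
  have up: "up_closed opl ng z F"
    using assms(2) unfolding prime_filter_def lattice_filter_def by blast
  interpret mv opl ng z by (rule mv.intro) (fact assms(1))
  have "F \<subseteq> J_u opl ng F (kernel opl ng G)"
    by (rule H_subset_J_u)
  with subset_J_d[OF up assms(4)]
  have "F \<inter> G \<subseteq> J_u opl ng F (kernel opl ng G) \<inter> J_d opl ng z G (kernel opl ng F)"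
    by blast
  then have "sqimp opl ng (J_u opl ng F (kernel opl ng G)) (J_d opl ng z G (kernel opl ng F))
             \<subseteq> sqimp opl ng F G"
    using J_d_subset by (rule sqimp_antimono)
  moreover have "sqimp opl ng F G \<subseteq>
      sqimp opl ng (J_u opl ng F (kernel opl ng G)) (J_d opl ng z G (kernel opl ng F))"
    using up assms(4) by (rule sqimp_subset_sqimp_J)
  ultimately show ?thesis by (rule antisym[rotated])
qed

end
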